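(* Let $T$ be a bounded saturation theory, let $G$ and $E$ be finite sets of predicates of $T$, and let $\tau_e := \mathit{SDP}_T(G,E)$. Then for every subset $G' \subseteq G$, $[\tau_e]_{G'} = {\tt true}$ if and only if $\mathit{DP}_T(G' \cup \widetilde{E})$ returns UNSATISFIABLE.
   Context: A predicate is an atomic formula or its negation; a finite set of predicates is identified with the conjunction of its elements. The theory $T$ comes with inference rules; a rule instance is written $g \mathrel{:-} g_1,\dots,g_k$, meaning that $g$ (a predicate, or the contradiction symbol $\bot$) can be derived in one step from predicates $g_1,\dots,g_k$. For a set $H$ of predicates, $\widetilde{H} := \{\neg h : h \in H\}$. Saturation procedure $\mathrm{Sat}_N(H)$ (for a finite set $H$ of predicates and integer $N\ge 0$): (1) $W := H$. (2) Repeat $N$ times: set $W' := W$; for every predicate $g \notin W'$ for which there is a rule instance $g \mathrel{:-} g_1,\dots,g_k$ with all $g_j \in W'$, add $g$ to $W$. (3) If there is a rule instance $\bot \mathrel{:-} g_1,\dots,g_k$ with all $g_j\in W$, return UNSATISFIABLE, otherwise SATISFIABLE. $T$ is a bounded saturation theory if there is a function $d_T$ assigning to each finite set $H$ of predicates a natural number $d_T(H)$ such that for every $N \ge d_T(H)$, $\mathrm{Sat}_N(H)$ returns UNSATISFIABLE iff $H$ is unsatisfiable in $T$. Write $\mathit{DP}_T(H) := \mathrm{Sat}_{d_T(H)}(H)$ and, for a finite set $S$, $D_T(S) := \max\{d_T(S') : S' \subseteq S\}$. Symbolic decision procedure $\mathit{SDP}_T(G,E)$: introduce a Boolean variable $b_g$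 for each $g\in G$ (the set $B_G$). Let $N := D_T(G\cup\widetilde{E})$. (1) $W := G \cup \widetilde{E}$; set $\tau_{(g,0)} := b_g$ for $g\in G$ and $\tau_{(\neg e_i,0)} := {\tt true}$ for $e_i\in E$. (2) For $i = 1,\dots,N$: $W' := W$; set $S(g) := \emptyset$ for every predicate $g$; for every $g\in W'$ add $\tau_{(g,i-1)}$ to $S(g)$; for every predicate $g$ and every rule instance $g \mathrel{:-} g_1,\dots,g_k$ with all $g_m \in W'$, add the conjunction $\bigwedge_{m=1}^k \tau_{(g_m,i-1)}$ to $S(g)$ and add $g$ to $W$; then for each $g \in W$ set $\tau_{(g,i)} := \bigvee_{d\in S(g)} d$ and $\tau_{(g,\top)} := \tau_{(g,i)}$. (3) Let $S(e)$ be the set of conjunctions $\bigwedge_{m=1}^k \tau_{(g_m,\top)}$ over all rule instances $\bot \mathrel{:-} g_1,\dots,g_k$ with $\{g_1,\dots,g_k\}\subseteq W$, and set $\tau_e := \bigvee_{d\in S(e)} d$ (empty disjunction is ${\tt false}$). (4) Return $\tau_e$, a negation-free Boolean expression (with shared subexpressions) whose leaves are in $B_G$ or are constants. For a Boolean expression $\tau$ with leaves in $B_G$ and $G'\subseteq G$, $[\tau]_{G'}$ is the truth value of $\tau$ obtained by replacing each leaf $b_g$ by ${\tt true}$ if $g\in G'$ and ${\tt false}$ otherwise, with $\wedge,\vee$ interpreted as usual. *)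

theory Defs
  imports Main
begin

datatype 'a pred = Pos 'a | Neg 'a

fun negp :: "'a pred \<Rightarrow> 'a pred" where
  "negp (Pos a) = Neg a"
| "negp (Neg a) = Pos a"

definition tilde :: "'a pred set \<Rightarrow> 'a pred set" where
  "tilde H = negp ` H"

text \<open>A rule instance g :- g1,...,gk is a pair (c, [g1,...,gk]) where the conclusion c is
  Some g for a predicate g and None for the contradiction symbol bottom.\<close>
type_synonym 'a rule = "'a pred option \<times> 'a pred list"

fun satW :: "'a rule set \<Rightarrow> 'a pred set \<Rightarrow> nat \<Rightarrow> 'a pred set" where
  "satW R H 0 = H"
| "satW R H (Suc i) =
     satW R H i \<union> {g. \<exists>ps. (Some g, ps) \<in> R \<and> set ps \<subseteq> satW R H i}"

definition Sat_unsat :: "'a rule set \<Rightarrow> nat \<Rightarrow> 'a pred set \<Rightarrow> bool" where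
  "Sat_unsat R N H \<longleftrightarrow> (\<exists>ps. (None, ps) \<in> R \<and> set ps \<subseteq> satW R H N)"

definition bounded_saturation ::
    "'a rule set \<Rightarrow> ('a pred set \<Rightarrow> bool) \<Rightarrow> ('a pred set \<Rightarrow> nat) \<Rightarrow> bool" where
  "bounded_saturation R unsat d \<longleftrightarrow>
     (\<forall>H. finite H \<longrightarrow> (\<forall>N \<ge> d H. Sat_unsat R N H \<longleftrightarrow> unsat H))"

definition DP_unsat :: "'a rule set \<Rightarrow> ('a pred set \<Rightarrow> nat) \<Rightarrow> 'a pred set \<Rightarrow> bool" where
  "DP_unsat R d H \<longleftrightarrow> Sat_unsat R (d H) H"

definition DD :: "('a pred set \<Rightarrow> nat) \<Rightarrow> 'a pred set \<Rightarrow> nat" where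
  "DD d S = Max {d S' | S'. S' \<subseteq> S}"

text \<open>A negation-free Boolean expression over the variables b_g is represented by its
  meaning: a function from assignments of truth values to the variables b_g
  (indexed by the predicate g) to a truth value.\<close>
type_synonym 'a bexpr = "('a pred \<Rightarrow> bool) \<Rightarrow> bool"

definition bvar :: "'a pred \<Rightarrow> 'a bexpr" where "bvar g = (\<lambda>v. v g)"
definition bconst :: "bool \<Rightarrow> 'a bexpr" where "bconst b = (\<lambda>v. b)"
definition bconj :: "'a bexpr list \<Rightarrow> 'a bexpr" where "bconj ds = (\<lambda>v. \<forall>d\<in>set ds. d v)"
definition bdisj :: "'a bexpr set \<Rightarrow> 'a bexpr" where "bdisj S = (\<lambda>v. \<exists>d\<in>S. d v)"

definition beval :: "'a bexpr \<Rightarrow> 'a pred set \<Rightarrow> bool" where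
  "beval \<tau> G' = \<tau> (\<lambda>g. g \<in> G')"

text \<open>Step (1): tau_(g,0) = b_g for g in G, overwritten by true for
  g in tilde E; predicates outside W get the empty disjunction (false), which is
  never used.\<close>
fun sdp_tau :: "'a rule set \<Rightarrow> 'a pred set \<Rightarrow> 'a pred set \<Rightarrow> nat \<Rightarrow> 'a pred \<Rightarrow> 'a bexpr" where
  "sdp_tau R G E 0 g =
     (if g \<in> tilde E then bconst True else if g \<in> G then bvar g else bconst False)"
| "sdp_tau R G E (Suc i) g =
     bdisj ({sdp_tau R G E i g | _::unit. g \<in> satW R (G \<union> tilde E) i}
            \<union> {bconj (map (sdp_tau R G E i) ps) | ps.
                 (Some g, ps) \<in> R \<and> set ps \<subseteq> satW R (G \<union> tilde E) i})"

definition SDP :: "'a rule set \<Rightarrow> ('a pred set \<Rightarrow> nat) \<Rightarrow> 'a pred set \<Rightarrow> 'a pred set \<Rightarrow> 'a bexpr" where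
  "SDP R d G E =
    (let N = DD d (G \<union> tilde E) in
     bdisj {bconj (map (sdp_tau R G E N) ps) | ps.
              (None, ps) \<in> R \<and> set ps \<subseteq> satW R (G \<union> tilde E) N})"

end

theory Submission
  imports Defs
begin

text \<open>Evaluating \<open>\<tau>(g,i)\<close> at \<open>G' \<subseteq> G\<close> yields true exactly when \<open>g\<close> lies in the
  \<open>i\<close>-th saturation round started from \<open>G' \<union> \<tilde>E\<close>: by induction on \<open>i\<close>, each rule
  disjunct of \<open>\<tau>\<close> mirrors one rule application, and the guards, which ask for membership in
  the rounds started from the larger set \<open>G \<union> \<tilde>E\<close>, hold automatically because saturation is
  monotone in its start set. Hence \<open>[\<tau>\<^sub>e]\<close> at \<open>G'\<close> is \<open>Sat\<^sub>N(G' \<union> \<tilde>E)\<close> for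
  \<open>N = D\<^sub>T(G \<union> \<tilde>E) \<ge> d\<^sub>T(G' \<union> \<tilde>E)\<close>, and every such \<open>N\<close> gives the same answer as
  \<open>DP\<^sub>T\<close> in a bounded saturation theory.\<close>

lemma satW_mono: "H \<subseteq> H' \<Longrightarrow> satW R H i \<subseteq> satW R H' i"
  by (induction i) auto

lemma sdp_tau_Suc_iff:
  "sdp_tau R G E (Suc i) g v \<longleftrightarrow>
     (g \<in> satW R (G \<union> tilde E) i \<and> sdp_tau R G E i g v) \<or>
     (\<exists>ps. (Some g, ps) \<in> R \<and> set ps \<subseteq> satW R (G \<union> tilde E) i \<and>
        (\<forall>p\<in>set ps. sdp_tau R G E i p v))"
  by (auto simp: bdisj_def bconj_def)

lemma sdp_tau_eval:
  assumes "G' \<subseteq> G"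
  shows "sdp_tau R G E i g (\<lambda>g. g \<in> G') \<longleftrightarrow> g \<in> satW R (G' \<union> tilde E) i"
proof (induction i arbitrary: g)
  case 0
  show ?case using assms by (auto simp: bconst_def bvar_def)
next
  case (Suc i)
  have "satW R (G' \<union> tilde E) i \<subseteq> satW R (G \<union> tilde E) i"
    using assms by (intro satW_mono) auto
  then show ?case
    unfolding sdp_tau_Suc_iff Suc.IH by auto
qed

lemma SDP_iff:
  "SDP R d G E v \<longleftrightarrow>
     (\<exists>ps. (None, ps) \<in> R \<and> set ps \<subseteq> satW R (G \<union> tilde E) (DD d (G \<union> tilde E)) \<and>
        (\<forall>p\<in>set ps. sdp_tau R G E (DD d (G \<union> tilde E)) p v))"
  unfolding SDP_def Let_def by (auto simp: bdisj_def bconj_def)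

lemma SDP_eval:
  assumes "G' \<subseteq> G"
  shows "beval (SDP R d G E) G' \<longleftrightarrow> Sat_unsat R (DD d (G \<union> tilde E)) (G' \<union> tilde E)"
proof -
  let ?N = "DD d (G \<union> tilde E)"
  have "satW R (G' \<union> tilde E) ?N \<subseteq> satW R (G \<union> tilde E) ?N"
    using assms by (intro satW_mono) auto
  then show ?thesis
    unfolding beval_def SDP_iff Sat_unsat_def sdp_tau_eval[OF assms] by blast
qed

lemma le_DD:
  assumes "finite S" and "S' \<subseteq> S"
  shows "d S' \<le> DD d S"
proof -
  have "{d S' | S'. S' \<subseteq> S} = d ` Pow S" by auto
  then show ?thesis
    unfolding DD_def using assms by (auto intro: Max_ge)
qed

lemma bounded_saturation_Sat_unsat_iff_DP_unsat:
  assumes "bounded_saturation R unsat d" and "finite H" and "d H \<le> N"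
  shows "Sat_unsat R N H \<longleftrightarrow> DP_unsat R d H"
  using assms unfolding bounded_saturation_def DP_unsat_def by auto

theorem theorem3p3:
  fixes R :: "'a rule set" and unsat :: "'a pred set \<Rightarrow> bool"
    and d :: "'a pred set \<Rightarrow> nat" and G E :: "'a pred set"
  assumes "bounded_saturation R unsat d"
    and "finite G" and "finite E"
  shows "\<forall>G' \<subseteq> G. beval (SDP R d G E) G' \<longleftrightarrow> DP_unsat R d (G' \<union> tilde E)"
proof (intro allI impI)
  fix G' assume "G' \<subseteq> G"
  have "finite (G \<union> tilde E)"
    using assms(2,3) by (simp add: tilde_def)
  moreover have "G' \<union> tilde E \<subseteq> G \<union> tilde E"
    using \<open>G' \<subseteq> G\<close> by auto
  ultimately have "finite (G' \<union> tilde E)" and "d (G' \<union> tilde E) \<le> DD d (G \<union> tilde E)"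
    by (auto intro: finite_subset le_DD)
  with \<open>G' \<subseteq> G\<close> show "beval (SDP R d G E) G' \<longleftrightarrow> DP_unsat R d (G' \<union> tilde E)"
    by (simp add: SDP_eval bounded_saturation_Sat_unsat_iff_DP_unsat[OF assms(1)])
qed

end
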